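(* Let $f$ be an $n$-variable Boolean function with $f\neq\delta_0$ and $f^c\neq\delta_0$. Then $|{FAI}(f^c)-{FAI}(f)|\le 2$.
   Context: An $n$-variable Boolean function is a map $\mathbb{F}_2^n\to\mathbb{F}_2$, with algebraic degree $\deg$ the degree of its algebraic normal form (ANF). $\delta_0$ is the indicator function of $\{0\}\subseteq\mathbb{F}_2^n$. The algebraic complement $f^c$ of $f$ is the function whose ANF consists of exactly the monomials $\prod_{i\in I}x_i$, $I\subseteq\{1,\dots,n\}$, that do not appear in the ANF of $f$; equivalently $f^c=f+\delta_0$. ${AN}^c(f)$ is the set of $g$ with $f\cdot g\neq0$, and ${FAI}(f)$ is the minimum of $\deg(g)+\deg(f\cdot g)$ over $g\in{AN}^c(f)$, $g\neq 1$. *)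

theory Defs
  imports Main
begin

text \<open>The n variables are indexed by a
  finite type 'n (so n = CARD('n)); a vector x in F_2^n is identified with its support
  x :: 'n set (the set of coordinates equal to 1), and F_2 with bool (addition = xor,
  multiplication = conjunction).\<close>

type_synonym 'n boolfun = "'n set \<Rightarrow> bool"

text \<open>ANF coefficient of the monomial prod_{i in I} x_i: a_I = sum_{J subseteq I} f(J) (mod 2).\<close>
definition anf :: "('n::finite) boolfun \<Rightarrow> 'n set \<Rightarrow> bool" where
  "anf f I = odd (card {J. J \<subseteq> I \<and> f J})"

text \<open>Evaluation of the polynomial whose ANF has exactly the monomials in the set A.\<close>
definition anf_eval :: "('n::finite) set set \<Rightarrow> 'n boolfun" where
  "anf_eval A x = odd (card {I \<in> A. I \<subseteq> x})"

definition alg_deg :: "('n::finite) boolfun \<Rightarrow> nat" where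
  "alg_deg f = Max (insert 0 {card I | I. anf f I})"

definition delta0 :: "('n::finite) boolfun" where
  "delta0 x = (x = {})"

definition alg_compl :: "('n::finite) boolfun \<Rightarrow> 'n boolfun" where
  "alg_compl f = anf_eval {I. \<not> anf f I}"

definition bf_mult :: "('n::finite) boolfun \<Rightarrow> 'n boolfun \<Rightarrow> 'n boolfun" where
  "bf_mult f g = (\<lambda>x. f x \<and> g x)"

definition ANc :: "('n::finite) boolfun \<Rightarrow> 'n boolfun set" where
  "ANc f = {g. bf_mult f g \<noteq> (\<lambda>x. False)}"

definition FAI :: "('n::finite) boolfun \<Rightarrow> nat" where
  "FAI f = Min {alg_deg g + alg_deg (bf_mult f g) | g. g \<in> ANc f \<and> g \<noteq> (\<lambda>x. True)}"

end

theory Submission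
  imports Defs
begin

(* Since x has 2^|x| monomial divisors, the sum of all monomials is delta0; hence the
   algebraic complement is h = f + delta0, and symmetrically f = h + delta0.
   Take g attaining FAI(f).  If (fg)(x) = 1 at some x != 0, pick i with x_i = 1: the
   factor x_i kills the point 0, where f and h differ, so x_i g is admissible for h and
   raises both degrees by at most 1.  Otherwise fg = delta0 has degree n, while x_i,
   for any x with h(x) = 1 and x_i = 1, witnesses FAI(h) <= 1 + n. *)

lemma card_supsets_within:
  assumes "J \<subseteq> x" "finite x"
  shows "card {I. J \<subseteq> I \<and> I \<subseteq> x} = 2 ^ card (x - J)"
proof -
  have "bij_betw (\<lambda>I. I - J) {I. J \<subseteq> I \<and> I \<subseteq> x} (Pow (x - J))"
    by (rule bij_betw_byWitness[where f' = "\<lambda>K. K \<union> J"]) (use assms in auto)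
  then show ?thesis
    using assms by (simp add: bij_betw_same_card card_Pow)
qed

lemma anf_eval_anf: "anf_eval {I. anf f I} = f"
proof
  fix x :: "'a::finite set"
  have "(\<Sum>I\<in>Pow x. card {J. J \<subseteq> I \<and> f J})
      = (\<Sum>I\<in>Pow x. card {J \<in> Pow x. J \<subseteq> I \<and> f J})"
    by (intro sum.cong refl arg_cong[where f = card]) auto
  also have "\<dots> = (\<Sum>J\<in>Pow x. card {I \<in> Pow x. J \<subseteq> I \<and> f J})"
    using sum.swap_restrict[of "Pow x" "Pow x" "\<lambda>_ _. 1::nat"] by simp
  also have "\<dots> = (\<Sum>J\<in>Pow x. if f J then 2 ^ card (x - J) else 0)"
    by (intro sum.cong refl)
      (auto simp: card_supsets_within[symmetric] intro: arg_cong[where f = card])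
  finally have "even (card {I \<in> Pow x. anf f I}) \<longleftrightarrow>
      even (card {J \<in> Pow x. odd (if f J then 2 ^ card (x - J) else 0::nat)})"
    using even_sum_iff[of "Pow x" "\<lambda>I. card {J. J \<subseteq> I \<and> f J}"]
      even_sum_iff[of "Pow x" "\<lambda>J. if f J then 2 ^ card (x - J) else 0::nat"]
    by (simp only: anf_def finite_Pow_iff finite)
  also have "{J \<in> Pow x. odd (if f J then 2 ^ card (x - J) else 0::nat)} = {J. J = x \<and> f x}"
    by (auto simp: card_eq_0_iff)
  finally show "anf_eval {I. anf f I} x = f x"
    unfolding anf_eval_def by (cases "f x") (simp_all add: conj_commute)
qed

lemma anf_eval_Compl: "anf_eval (- A) x = (anf_eval A x \<noteq> delta0 x)"
proof -
  have "card {I \<in> - A. I \<subseteq> x} + card {I \<in> A. I \<subseteq> x} = card (Pow x)"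
    by (subst card_Un_disjoint[symmetric]) (auto intro: arg_cong[where f = card])
  then have "odd (card {I \<in> - A. I \<subseteq> x} + card {I \<in> A. I \<subseteq> x}) \<longleftrightarrow> x = {}"
    by (simp add: card_Pow)
  then show ?thesis
    unfolding anf_eval_def delta0_def by (simp only: odd_add) blast
qed

lemma alg_compl_eq: "alg_compl f = (\<lambda>x. f x \<noteq> delta0 x)"
  using anf_eval_Compl[of "{I. anf f I}"] anf_eval_anf[of f]
  by (simp add: alg_compl_def Compl_eq fun_eq_iff)

lemma card_le_alg_deg: "anf f I \<Longrightarrow> card I \<le> alg_deg f"
  unfolding alg_deg_def by (intro Max_ge) auto

lemma alg_deg_leI: "(\<And>I. anf f I \<Longrightarrow> card I \<le> d) \<Longrightarrow> alg_deg f \<le> d"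
  unfolding alg_deg_def by (subst Max_le_iff) auto

lemma alg_deg_le_card_UNIV: "alg_deg (f :: 'n::finite boolfun) \<le> card (UNIV :: 'n set)"
  by (rule alg_deg_leI) (simp add: card_mono)

lemma alg_deg_delta0: "alg_deg (delta0 :: 'n::finite boolfun) = card (UNIV :: 'n set)"
proof (rule antisym[OF alg_deg_le_card_UNIV card_le_alg_deg])
  show "anf delta0 UNIV"
    by (simp add: anf_def delta0_def)
qed

lemma anf_mult_var:
  "anf (\<lambda>y. i \<in> y \<and> g y) I \<longleftrightarrow> i \<in> I \<and> anf g I \<noteq> anf g (I - {i})"
proof (cases "i \<in> I")
  case True
  have "card {J. J \<subseteq> I \<and> g J} = card {J. J \<subseteq> I \<and> i \<in> J \<and> g J} + card {J. J \<subseteq> I - {i} \<and> g J}"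
    by (subst card_Un_disjoint[symmetric]) (auto intro: arg_cong[where f = card])
  then show ?thesis
    using True by (auto simp: anf_def)
next
  case False
  then have "{J. J \<subseteq> I \<and> i \<in> J \<and> g J} = {}"
    by auto
  then show ?thesis
    using False unfolding anf_def by (simp only: card.empty) simp
qed

lemma alg_deg_mult_var: "alg_deg (\<lambda>y. i \<in> y \<and> g y) \<le> alg_deg g + 1"
proof (rule alg_deg_leI)
  fix I
  assume "anf (\<lambda>y. i \<in> y \<and> g y) I"
  then have "i \<in> I" and "anf g I \<or> anf g (I - {i})"
    unfolding anf_mult_var by auto
  then show "card I \<le> alg_deg g + 1"
    using card_le_alg_deg[of g I] card_le_alg_deg[of g "I - {i}"] card_Diff_singleton[of i I]
    by fastforce
qed

lemma anf_var: "anf (\<lambda>y. i \<in> y) I \<longleftrightarrow> I = {i}"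
proof -
  have "anf (\<lambda>_. True) J \<longleftrightarrow> J = {}" for J :: "'a::finite set"
    by (simp add: anf_def Pow_def[symmetric] card_Pow)
  then have "anf (\<lambda>y. i \<in> y) I \<longleftrightarrow> i \<in> I \<and> I - {i} = {}"
    using anf_mult_var[of i "\<lambda>_. True" I] by auto
  then show ?thesis
    by blast
qed

lemma alg_deg_var: "alg_deg (\<lambda>y. i \<in> y) \<le> 1"
  by (rule alg_deg_leI) (simp add: anf_var)

lemma FAI_le:
  assumes "g \<in> ANc f" "g \<noteq> (\<lambda>_. True)"
  shows "FAI f \<le> alg_deg g + alg_deg (bf_mult f g)"
  unfolding FAI_def using assms by (intro Min_le) auto

lemma FAI_attained:
  assumes "f \<noteq> (\<lambda>_. False)"
  obtains g where "g \<in> ANc f" "g \<noteq> (\<lambda>_. True)" "FAI f = alg_deg g + alg_deg (bf_mult f g)"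
proof -
  obtain x where "f x"
    using assms by auto
  then have "(\<lambda>y. y = x) \<in> ANc f"
    by (auto simp: ANc_def bf_mult_def fun_eq_iff)
  moreover have "(\<lambda>y. y = x) \<noteq> (\<lambda>_. True)"
    by (metis empty_not_UNIV)
  ultimately have "{alg_deg g + alg_deg (bf_mult f g) | g. g \<in> ANc f \<and> g \<noteq> (\<lambda>_. True)} \<noteq> {}"
    by blast
  from Min_in[OF _ this] show ?thesis
    using that unfolding FAI_def by auto
qed

lemma FAI_le_mult_var:
  assumes "f x" "g x" "i \<in> x"
  shows "FAI f \<le> alg_deg (\<lambda>y. i \<in> y \<and> g y) + alg_deg (bf_mult f (\<lambda>y. i \<in> y \<and> g y))"
proof (rule FAI_le)
  show "(\<lambda>y. i \<in> y \<and> g y) \<in> ANc f"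
    using assms by (auto simp: ANc_def bf_mult_def fun_eq_iff)
  show "(\<lambda>y. i \<in> y \<and> g y) \<noteq> (\<lambda>_. True)"
    by (auto simp: fun_eq_iff)
qed

lemma FAI_add_delta0_le:
  fixes F :: "'n::finite boolfun"
  assumes F_nonzero: "F \<noteq> (\<lambda>_. False)"
    and H_nonzero: "(\<lambda>x. F x \<noteq> delta0 x) \<noteq> (\<lambda>_. False)"
  shows "FAI (\<lambda>x. F x \<noteq> delta0 x) \<le> FAI F + 2"
proof -
  define H where "H = (\<lambda>x. F x \<noteq> delta0 x)"
  obtain g where g: "g \<in> ANc F" and FAI_F: "FAI F = alg_deg g + alg_deg (bf_mult F g)"
    using FAI_attained[OF F_nonzero] by blast
  obtain x0 where x0: "bf_mult F g x0"
    using g by (auto simp: ANc_def)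
  consider x where "x \<noteq> {}" "bf_mult F g x" | "bf_mult F g = delta0"
  proof (cases "\<exists>x. x \<noteq> {} \<and> bf_mult F g x")
    case False
    then have "bf_mult F g = delta0"
      using x0 by (auto simp: delta0_def fun_eq_iff) metis
    then show ?thesis
      using that(2) by blast
  qed blast
  then show ?thesis
  proof cases
    case (1 x)
    then obtain i where "i \<in> x"
      by blast
    have H_mult: "bf_mult H (\<lambda>y. i \<in> y \<and> g y) = (\<lambda>y. i \<in> y \<and> bf_mult F g y)"
      by (auto simp: H_def bf_mult_def delta0_def)
    have "FAI H \<le> alg_deg (\<lambda>y. i \<in> y \<and> g y) + alg_deg (bf_mult H (\<lambda>y. i \<in> y \<and> g y))"
      using FAI_le_mult_var[of H x g i] 1 \<open>i \<in> x\<close> by (auto simp: H_def bf_mult_def delta0_def)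
    also have "\<dots> \<le> FAI F + 2"
      unfolding H_mult
      using alg_deg_mult_var[of i g] alg_deg_mult_var[of i "bf_mult F g"] FAI_F by simp
    finally show ?thesis
      by (simp add: H_def)
  next
    case 2
    then have "\<not> H {}"
      by (auto simp: H_def bf_mult_def delta0_def fun_eq_iff)
    moreover obtain x where "H x"
      using H_nonzero by (auto simp: H_def)
    ultimately obtain i where "H x" "i \<in> x"
      by (metis equals0I)
    then have "FAI H \<le> alg_deg (\<lambda>y. i \<in> y) + alg_deg (bf_mult H (\<lambda>y. i \<in> y))"
      using FAI_le_mult_var[of H x "\<lambda>_. True" i] by simp
    also have "\<dots> \<le> 1 + alg_deg (bf_mult F g)"
      using alg_deg_var[of i] alg_deg_le_card_UNIV[of "bf_mult H (\<lambda>y. i \<in> y)"]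
      by (simp add: 2 alg_deg_delta0)
    finally show ?thesis
      by (simp add: H_def FAI_F)
  qed
qed

theorem proposition13:
  fixes f :: "('n::finite) set \<Rightarrow> bool"
  assumes "f \<noteq> delta0" and "alg_compl f \<noteq> delta0"
  shows "\<bar>int (FAI (alg_compl f)) - int (FAI f)\<bar> \<le> 2"
proof -
  have f: "f = (\<lambda>x. alg_compl f x \<noteq> delta0 x)"
    by (auto simp: alg_compl_eq)
  have "f \<noteq> (\<lambda>_. False)" "alg_compl f \<noteq> (\<lambda>_. False)"
    using assms by (auto simp: alg_compl_eq fun_eq_iff)
  then have "FAI (alg_compl f) \<le> FAI f + 2" and "FAI f \<le> FAI (alg_compl f) + 2"
    using FAI_add_delta0_le[of f] FAI_add_delta0_le[of "alg_compl f"] f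
    by (simp_all add: alg_compl_eq)
  then show ?thesis
    by linarith
qed

end
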